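(* Let $(W,S)$ be a finitely generated Coxeter system and $u,v\in W$. (1) If $u\le v$, then $C(v)\subseteq C(u)$ (equivalently $S(u)\subseteq S(v)$). (2) If $u\le v$, then $[u,v]=\{v_I: S(u)\subseteq I\subseteq S(v)\}$. (3) If $u\le v$, then $u\le_{\mathcal L} v$. (4) If $W_{S(u)}$ has finite index $k$ in $W$, then $|\{w\in W: w\ge u\}|=k$.
   Context: $(W,S)$ is a finitely generated Coxeter system with length function $\ell$. For $w\in W$, $S(w)\subseteq S$ is the set of simple reflections appearing in a (any) reduced expression of $w$, and $C(w)=S\setminus S(w)$. For $I\subseteq S$, $W_I$ is the parabolic subgroup generated by $I$, $X_I=\{u\in W:\ell(us)>\ell(u)\ \forall s\in I\}$, and every $w\in W$ factors uniquely as $w=w^Iw_I$ with $w^I\in X_I$, $w_I\in W_I$ (parabolic components along $I$), with $\ell(w)=\ell(w^I)+\ell(w_I)$. The partial order on $W$: $u\le v$ if and only if $v_{S(u)}=u$. The left weak order: $u\le_{\mathcal L}v$ iff there is $v'\in W$ with $v=v'u$ and $\ell(v)=\ell(v')+\ell(u)$. *)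

theory Defs
  imports "HOL-Algebra.Multiplicative_Group"
begin

(* Coxeter systems, rendered in HOL-Algebra: W = carrier G, S \<subseteq> carrier G. *)

definition wprod :: "('a, 'b) monoid_scheme \<Rightarrow> 'a list \<Rightarrow> 'a" where
  "wprod G ws = foldr (\<lambda>x y. x \<otimes>\<^bsub>G\<^esub> y) ws \<one>\<^bsub>G\<^esub>"

(* The congruence on words generated by the Coxeter relations
   s s = 1 and (s t)^{m(s,t)} = 1 (when m(s,t) = order of st is finite). *)
inductive cox_rel :: "('a, 'b) monoid_scheme \<Rightarrow> 'a set \<Rightarrow> 'a list \<Rightarrow> 'a list \<Rightarrow> bool"
  for G S where
  refl: "cox_rel G S w w"
| sym: "cox_rel G S w w' \<Longrightarrow> cox_rel G S w' w"
| trans: "cox_rel G S w w' \<Longrightarrow> cox_rel G S w' w'' \<Longrightarrow> cox_rel G S w w''"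
| ctxt: "cox_rel G S w w' \<Longrightarrow> cox_rel G S (a @ w @ b) (a @ w' @ b)"
| sq: "s \<in> S \<Longrightarrow> cox_rel G S [s, s] []"
| braid: "s \<in> S \<Longrightarrow> t \<in> S \<Longrightarrow> group.ord G (s \<otimes>\<^bsub>G\<^esub> t) \<noteq> 0 \<Longrightarrow>
           cox_rel G S (concat (replicate (group.ord G (s \<otimes>\<^bsub>G\<^esub> t)) [s, t])) []"

definition coxeter_system :: "('a, 'b) monoid_scheme \<Rightarrow> 'a set \<Rightarrow> bool" where
  "coxeter_system G S \<longleftrightarrow> group G \<and> S \<subseteq> carrier G \<and>
     (\<forall>s\<in>S. s \<noteq> \<one>\<^bsub>G\<^esub> \<and> s \<otimes>\<^bsub>G\<^esub> s = \<one>\<^bsub>G\<^esub>) \<and>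
     generate G S = carrier G \<and>
     (\<forall>w1\<in>lists S. \<forall>w2\<in>lists S. wprod G w1 = wprod G w2 \<longrightarrow> cox_rel G S w1 w2)"

definition cox_len :: "('a, 'b) monoid_scheme \<Rightarrow> 'a set \<Rightarrow> 'a \<Rightarrow> nat" where
  "cox_len G S w = (LEAST n. \<exists>ws\<in>lists S. length ws = n \<and> wprod G ws = w)"

definition reduced_word :: "('a, 'b) monoid_scheme \<Rightarrow> 'a set \<Rightarrow> 'a list \<Rightarrow> 'a \<Rightarrow> bool" where
  "reduced_word G S ws w \<longleftrightarrow> ws \<in> lists S \<and> wprod G ws = w \<and> length ws = cox_len G S w"

definition supp :: "('a, 'b) monoid_scheme \<Rightarrow> 'a set \<Rightarrow> 'a \<Rightarrow> 'a set" where
  "supp G S w = {s. \<exists>ws. reduced_word G S ws w \<and> s \<in> set ws}"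

definition cosupp :: "('a, 'b) monoid_scheme \<Rightarrow> 'a set \<Rightarrow> 'a \<Rightarrow> 'a set" where
  "cosupp G S w = S - supp G S w"

definition parabolic :: "('a, 'b) monoid_scheme \<Rightarrow> 'a set \<Rightarrow> 'a set" where
  "parabolic G I = generate G I"

definition min_reps :: "('a, 'b) monoid_scheme \<Rightarrow> 'a set \<Rightarrow> 'a set \<Rightarrow> 'a set" where
  "min_reps G S I = {u \<in> carrier G. \<forall>s\<in>I. cox_len G S u < cox_len G S (u \<otimes>\<^bsub>G\<^esub> s)}"

definition par_comp :: "('a, 'b) monoid_scheme \<Rightarrow> 'a set \<Rightarrow> 'a set \<Rightarrow> 'a \<Rightarrow> 'a" where
  "par_comp G S I w = (THE y. y \<in> parabolic G I \<and> w \<otimes>\<^bsub>G\<^esub> inv\<^bsub>G\<^esub> y \<in> min_reps G S I)"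

definition cox_le :: "('a, 'b) monoid_scheme \<Rightarrow> 'a set \<Rightarrow> 'a \<Rightarrow> 'a \<Rightarrow> bool" where
  "cox_le G S u v \<longleftrightarrow> u \<in> carrier G \<and> v \<in> carrier G \<and> par_comp G S (supp G S u) v = u"

definition cox_interval :: "('a, 'b) monoid_scheme \<Rightarrow> 'a set \<Rightarrow> 'a \<Rightarrow> 'a \<Rightarrow> 'a set" where
  "cox_interval G S u v = {w \<in> carrier G. cox_le G S u w \<and> cox_le G S w v}"

definition left_weak_le :: "('a, 'b) monoid_scheme \<Rightarrow> 'a set \<Rightarrow> 'a \<Rightarrow> 'a \<Rightarrow> bool" where
  "left_weak_le G S u v \<longleftrightarrow>
     (\<exists>v'\<in>carrier G. v = v' \<otimes>\<^bsub>G\<^esub> u \<and> cox_len G S v = cox_len G S v' + cox_len G S u)"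

end

theory Submission
  imports Defs
begin

(* Everything is derived from the presentation by Tits' reflection cocycle: the parity, for a word
   s1 ... sn and an element r, of the number of i with s1 ... s(i-1) si s(i-1) ... s1 = r.
   It is invariant under the Coxeter relations, hence depends only on the product of the word,
   and for a reduced word exactly n elements r have odd parity. This gives the exchange
   condition, and with it the parabolic factorisation: every w is uniquely x y with x in X_I
   and y in W_I, lengths add, and reduced words of elements of W_I only use letters of I.
   Then u <= v says exactly that v = x u with x in X_S(u). Concatenating reduced words of x and
   u gives (1) and (3); x |-> x u is a bijection from X_S(u), a transversal of the cosets of
   W_S(u), onto the elements above u, which gives (4); and (2) follows from (v_I)_J = v_J for
   J \<subseteq> I. *)

lemma wprod_Nil [simp]: "wprod G [] = \<one>\<^bsub>G\<^esub>"
  by (simp add: wprod_def)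

lemma wprod_Cons [simp]: "wprod G (x # xs) = x \<otimes>\<^bsub>G\<^esub> wprod G xs"
  by (simp add: wprod_def)

lemma (in monoid) wprod_closed: "set xs \<subseteq> carrier G \<Longrightarrow> wprod G xs \<in> carrier G"
  by (induct xs) auto

lemma (in monoid) wprod_append:
  "set xs \<subseteq> carrier G \<Longrightarrow> set ys \<subseteq> carrier G \<Longrightarrow> wprod G (xs @ ys) = wprod G xs \<otimes> wprod G ys"
  by (induct xs) (auto simp: wprod_closed m_assoc)

lemma (in monoid) wprod_concat_replicate:
  "x \<in> carrier G \<Longrightarrow> y \<in> carrier G \<Longrightarrow> wprod G (concat (replicate n [x, y])) = (x \<otimes> y) [^] n"
proof (induct n)
  case (Suc n)
  then show ?case using nat_pow_Suc2[of "x \<otimes> y" n] by (simp add: m_assoc)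
qed simp

lemma (in group) conj_eq_iff:
  "a \<in> carrier G \<Longrightarrow> q \<in> carrier G \<Longrightarrow> r \<in> carrier G \<Longrightarrow>
   (q = inv a \<otimes> r \<otimes> a) = (r = a \<otimes> q \<otimes> inv a)"
  by (auto simp: m_assoc[symmetric]) (simp_all add: m_assoc)

lemma concat_replicate_Suc_snoc: "concat (replicate (Suc n) xs) = concat (replicate n xs) @ xs"
  by (induct n) auto

lemma length_filter_upt_double:
  assumes "\<And>i. P (i + m) = P i"
  shows "length (filter P [0..<2*m]) = 2 * length (filter P [0..<m])"
proof -
  have "[0..<2*m] = [0..<m] @ map (\<lambda>i. i + m) [0..<m]"
    using upt_add_eq_append[of 0 m m] map_add_upt[of m m] by (simp add: mult_2)
  moreover have "filter P (map (\<lambda>i. i + m) [0..<m]) = map (\<lambda>i. i + m) (filter P [0..<m])"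
    using assms by (simp add: filter_map comp_def)
  ultimately show ?thesis by simp
qed

lemma append_eq_append_Cons_cases:
  "xs @ ys = us @ z # vs \<Longrightarrow>
   (\<exists>ws. us = xs @ ws \<and> ys = ws @ z # vs) \<or> (\<exists>ws. xs = us @ z # ws \<and> vs = ws @ ys)"
  by (auto simp: append_eq_append_conv2 append_eq_Cons_conv)

fun refl_parity :: "('a, 'b) monoid_scheme \<Rightarrow> 'a list \<Rightarrow> 'a \<Rightarrow> bool" where
  "refl_parity G [] r = False"
| "refl_parity G (x # a) r = ((x = r) \<noteq> refl_parity G a (inv\<^bsub>G\<^esub> x \<otimes>\<^bsub>G\<^esub> r \<otimes>\<^bsub>G\<^esub> x))"

definition inversion_set :: "('a, 'b) monoid_scheme \<Rightarrow> 'a list \<Rightarrow> 'a set" where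
  "inversion_set G a = {r \<in> carrier G. refl_parity G a r}"

lemma (in group) refl_parity_append:
  "set a \<subseteq> carrier G \<Longrightarrow> r \<in> carrier G \<Longrightarrow>
   refl_parity G (a @ b) r =
     (refl_parity G a r \<noteq> refl_parity G b (inv (wprod G a) \<otimes> r \<otimes> wprod G a))"
proof (induct a arbitrary: r)
  case Nil then show ?case by simp
next
  case (Cons x a)
  have x: "x \<in> carrier G" and a: "set a \<subseteq> carrier G" using Cons.prems by auto
  have "inv (wprod G a) \<otimes> (inv x \<otimes> r \<otimes> x) \<otimes> wprod G a
        = inv (x \<otimes> wprod G a) \<otimes> r \<otimes> (x \<otimes> wprod G a)"
    using x a Cons.prems wprod_closed by (simp add: inv_mult_group m_assoc)
  then show ?case using Cons x a by auto
qed

lemma (in group) refl_parity_split: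
  "set a \<subseteq> carrier G \<Longrightarrow> r \<in> carrier G \<Longrightarrow> refl_parity G a r \<Longrightarrow>
   \<exists>xs y zs. a = xs @ y # zs \<and> r = wprod G xs \<otimes> y \<otimes> inv (wprod G xs)"
proof (induct a arbitrary: r)
  case Nil then show ?case by simp
next
  case (Cons x a)
  have x: "x \<in> carrier G" and a: "set a \<subseteq> carrier G" using Cons.prems by auto
  show ?case
  proof (cases "x = r")
    case True
    then have "x # a = [] @ x # a \<and> r = wprod G [] \<otimes> x \<otimes> inv (wprod G [])" using x by simp
    then show ?thesis by blast
  next
    case False
    let ?r' = "inv x \<otimes> r \<otimes> x"
    have r'c: "?r' \<in> carrier G" using x Cons.prems(2) by simp
    have "refl_parity G a ?r'" using Cons.prems False by simp
    then obtain xs y zs where h: "a = xs @ y # zs" "?r' = wprod G xs \<otimes> y \<otimes> inv (wprod G xs)"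
      using Cons.hyps[OF a r'c] by blast
    have X: "wprod G xs \<in> carrier G" and y: "y \<in> carrier G" using a h wprod_closed by auto
    have "r = x \<otimes> ?r' \<otimes> inv x" using conj_eq_iff[OF x r'c Cons.prems(2)] by simp
    also have "\<dots> = wprod G (x # xs) \<otimes> y \<otimes> inv (wprod G (x # xs))"
      using h X x y by (simp add: m_assoc inv_mult_group)
    finally have "x # a = (x # xs) @ y # zs \<and> r = wprod G (x # xs) \<otimes> y \<otimes> inv (wprod G (x # xs))"
      using h by simp
    then show ?thesis by blast
  qed
qed

lemma (in group) finite_inversion_set:
  assumes a: "set a \<subseteq> carrier G"
  shows "finite (inversion_set G a)"
proof -
  let ?t = "\<lambda>i. wprod G (take i a) \<otimes> a ! i \<otimes> inv (wprod G (take i a))"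
  have "inversion_set G a \<subseteq> ?t ` {..<length a}"
  proof
    fix r assume "r \<in> inversion_set G a"
    then have "r \<in> carrier G" "refl_parity G a r" by (simp_all add: inversion_set_def)
    then obtain xs y zs where "a = xs @ y # zs" "r = wprod G xs \<otimes> y \<otimes> inv (wprod G xs)"
      using refl_parity_split[OF a] by blast
    then show "r \<in> ?t ` {..<length a}" by (intro image_eqI[of _ _ "length xs"]) auto
  qed
  then show ?thesis by (rule finite_subset) simp
qed

locale coxeter = group G for G :: "('a, 'b) monoid_scheme" (structure) +
  fixes S :: "'a set"
  assumes coxeter_system: "coxeter_system G S"

lemma coxeter_system_imp_coxeter: "coxeter_system G S \<Longrightarrow> coxeter G S"
  unfolding coxeter_def coxeter_axioms_def by (simp add: coxeter_system_def)

context coxeter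
begin

abbreviation len :: "'a \<Rightarrow> nat" where
  "len \<equiv> cox_len G S"

lemma gen_closed: "s \<in> S \<Longrightarrow> s \<in> carrier G"
  using coxeter_system by (auto simp: coxeter_system_def)

lemma gen_square: "s \<in> S \<Longrightarrow> s \<otimes> s = \<one>"
  using coxeter_system by (simp add: coxeter_system_def)

lemma gen_neq_one: "s \<in> S \<Longrightarrow> s \<noteq> \<one>"
  using coxeter_system by (simp add: coxeter_system_def)

lemma inv_gen: "s \<in> S \<Longrightarrow> inv s = s"
  using gen_square gen_closed by (simp add: inv_equality)

lemma cox_rel_if_wprod_eq:
  "a \<in> lists S \<Longrightarrow> b \<in> lists S \<Longrightarrow> wprod G a = wprod G b \<Longrightarrow> cox_rel G S a b"
  using coxeter_system by (simp add: coxeter_system_def)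

lemma words_closed: "a \<in> lists S \<Longrightarrow> set a \<subseteq> carrier G"
  using gen_closed by auto

lemma wprod_closed_words: "a \<in> lists S \<Longrightarrow> wprod G a \<in> carrier G"
  using wprod_closed words_closed by blast

lemma wprod_append_words:
  "a \<in> lists S \<Longrightarrow> b \<in> lists S \<Longrightarrow> wprod G (a @ b) = wprod G a \<otimes> wprod G b"
  using wprod_append words_closed by blast

lemma wprod_rev: "a \<in> lists S \<Longrightarrow> wprod G (rev a) = inv (wprod G a)"
proof (induct a)
  case Nil then show ?case by simp
next
  case (Cons x a)
  have x: "x \<in> S" and a: "a \<in> lists S" using Cons.prems by auto
  have "wprod G (rev (x # a)) = inv (wprod G a) \<otimes> x"
    using Cons x gen_closed wprod_append_words[of "rev a" "[x]"] by (simp add: in_lists_conv_set)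
  also have "\<dots> = inv (x \<otimes> wprod G a)"
    using x a gen_closed inv_gen wprod_closed_words by (simp add: inv_mult_group)
  finally show ?case by simp
qed

lemma gen_mult_inv_pow:
  fixes n :: nat
  assumes s: "s \<in> S" and t: "t \<in> S"
  shows "s \<otimes> inv ((s \<otimes> t) [^] n) = (s \<otimes> t) [^] n \<otimes> s"
proof (induct n)
  case 0 then show ?case using gen_closed[OF s] by simp
next
  case (Suc n)
  have sc: "s \<in> carrier G" and tc: "t \<in> carrier G" using s t gen_closed by auto
  let ?x = "s \<otimes> t"
  have "s \<otimes> inv (?x [^] Suc n) = (s \<otimes> inv ?x) \<otimes> inv (?x [^] n)"
    using sc tc by (simp add: inv_mult_group m_assoc)
  also have "s \<otimes> inv ?x = ?x \<otimes> s"
    using sc tc s t inv_gen by (simp add: inv_mult_group m_assoc)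
  also have "?x \<otimes> s \<otimes> inv (?x [^] n) = ?x \<otimes> (?x [^] n \<otimes> s)"
    using Suc sc tc by (simp add: m_assoc)
  also have "\<dots> = ?x [^] Suc n \<otimes> s"
    using sc tc by (simp add: m_assoc[symmetric] nat_pow_Suc2[symmetric])
  finally show ?case .
qed

lemma refl_parity_braid_word:
  assumes s: "s \<in> S" and t: "t \<in> S" and r: "r \<in> carrier G"
  shows "refl_parity G (concat (replicate n [s, t])) r =
         odd (length (filter (\<lambda>i. r = (s \<otimes> t) [^] i \<otimes> s) [0..<2*n]))"
proof (induct n)
  case 0 then show ?case by simp
next
  case (Suc n)
  have sc: "s \<in> carrier G" and tc: "t \<in> carrier G" using s t gen_closed by auto
  let ?x = "s \<otimes> t"
  let ?y = "?x [^] n"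
  let ?q = "inv ?y \<otimes> r \<otimes> ?y"
  have xc: "?x \<in> carrier G" and yc: "?y \<in> carrier G" and qc: "?q \<in> carrier G"
    using sc tc r by simp_all
  have first: "(s = ?q) = (r = ?x [^] (2*n) \<otimes> s)"
  proof -
    have "(s = ?q) = (r = ?y \<otimes> s \<otimes> inv ?y)" using conj_eq_iff[OF yc sc r] by simp
    also have "?y \<otimes> s \<otimes> inv ?y = ?y \<otimes> ?y \<otimes> s"
      using gen_mult_inv_pow[OF s t, of n] yc sc by (simp add: m_assoc)
    also have "?y \<otimes> ?y = ?x [^] (2*n)" using xc by (simp add: nat_pow_mult mult_2)
    finally show ?thesis .
  qed
  have second: "(t = inv s \<otimes> ?q \<otimes> s) = (r = ?x [^] (2*n+1) \<otimes> s)"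
  proof -
    have "(t = inv s \<otimes> ?q \<otimes> s) = (?q = ?x \<otimes> s)"
      using conj_eq_iff[OF sc tc qc] inv_gen[OF s] by auto
    also have "\<dots> = (r = ?y \<otimes> (?x \<otimes> s) \<otimes> inv ?y)"
      using conj_eq_iff[OF yc _ r, of "?x \<otimes> s"] xc sc by auto
    also have "?y \<otimes> (?x \<otimes> s) \<otimes> inv ?y = ?y \<otimes> ?x \<otimes> ?y \<otimes> s"
      using gen_mult_inv_pow[OF s t, of n] yc sc xc by (simp add: m_assoc)
    also have "?y \<otimes> ?x \<otimes> ?y = ?x [^] (2*n+1)"
      using xc nat_pow_mult[OF xc, of "Suc n" n] by (simp add: mult_2)
    finally show ?thesis .
  qed
  have "refl_parity G (concat (replicate (Suc n) [s, t])) r =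
        (refl_parity G (concat (replicate n [s, t])) r \<noteq> refl_parity G [s, t] ?q)"
    unfolding concat_replicate_Suc_snoc
    using refl_parity_append[of _ r] sc tc r wprod_concat_replicate by auto
  then show ?case using Suc first second by simp
qed

lemma refl_parity_braid_relator:
  assumes s: "s \<in> S" and t: "t \<in> S" and r: "r \<in> carrier G"
  shows "\<not> refl_parity G (concat (replicate (ord (s \<otimes> t)) [s, t])) r"
proof -
  let ?x = "s \<otimes> t"
  have xc: "?x \<in> carrier G" using s t gen_closed by simp
  have "?x [^] (i + ord ?x) = ?x [^] i" for i
    using nat_pow_mult[OF xc, of i "ord ?x"] xc by simp
  then show ?thesis
    unfolding refl_parity_braid_word[OF s t r]
    by (subst length_filter_upt_double[of _ "ord ?x"]) simp_all
qed

lemma refl_parity_square: "s \<in> S \<Longrightarrow> r \<in> carrier G \<Longrightarrow> \<not> refl_parity G [s, s] r"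
  using conj_eq_iff[of s s r] gen_closed inv_gen gen_square by (auto simp: m_assoc)

lemma refl_parity_context:
  assumes a: "set a \<subseteq> carrier G" and w: "set w \<subseteq> carrier G" and w': "set w' \<subseteq> carrier G"
    and eq: "wprod G w = wprod G w'"
    and parity_eq: "\<forall>r\<in>carrier G. refl_parity G w r = refl_parity G w' r"
    and r: "r \<in> carrier G"
  shows "refl_parity G (a @ w @ b) r = refl_parity G (a @ w' @ b) r"
proof -
  let ?r = "inv (wprod G a) \<otimes> r \<otimes> wprod G a"
  have rc: "?r \<in> carrier G" using a r wprod_closed by simp
  show ?thesis
    using refl_parity_append[OF a r] refl_parity_append[OF w rc] refl_parity_append[OF w' rc]
      eq parity_eq rc by simp
qed

(* The carrier condition is carried along because cox_rel also relates words with letters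
   outside S. *)
lemma cox_rel_invariant:
  "cox_rel G S a b \<Longrightarrow> (set a \<subseteq> carrier G \<longleftrightarrow> set b \<subseteq> carrier G) \<and>
     (set a \<subseteq> carrier G \<longrightarrow>
       wprod G a = wprod G b \<and> (\<forall>r\<in>carrier G. refl_parity G a r = refl_parity G b r))"
proof (induct rule: cox_rel.induct)
  case (ctxt w w' a b)
  then show ?case
    using refl_parity_context[of a w w' _ b] wprod_append wprod_closed by auto
next
  case (sq s)
  then show ?case
    using gen_closed gen_square by (auto simp: refl_parity_square simp del: refl_parity.simps(2))
next
  case (braid s t)
  then show ?case
    using gen_closed wprod_concat_replicate refl_parity_braid_relator by auto
qed auto

lemma refl_parity_wprod_eq:
  assumes "a \<in> lists S" "b \<in> lists S" "wprod G a = wprod G b" "r \<in> carrier G"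
  shows "refl_parity G a r = refl_parity G b r"
  using cox_rel_invariant[OF cox_rel_if_wprod_eq] words_closed assms by blast

lemma parabolic_eq_wprod_lists: "I \<subseteq> S \<Longrightarrow> parabolic G I = wprod G ` lists I"
proof
  assume I: "I \<subseteq> S"
  show "parabolic G I \<subseteq> wprod G ` lists I"
  proof
    fix h assume "h \<in> parabolic G I"
    then show "h \<in> wprod G ` lists I"
      unfolding parabolic_def
    proof (induct rule: generate.induct)
      case one then show ?case by (metis image_eqI lists.Nil wprod_Nil)
    next
      case (incl h)
      then have "wprod G [h] = h" using I gen_closed by auto
      then show ?case using incl by (metis image_eqI lists.Cons lists.Nil)
    next
      case (inv h)
      then have "wprod G [h] = inv h" using I gen_closed inv_gen by auto
      then show ?case using inv by (metis image_eqI lists.Cons lists.Nil)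
    next
      case (eng h1 h2)
      then obtain a b where "a \<in> lists I" "b \<in> lists I" "h1 = wprod G a" "h2 = wprod G b" by blast
      moreover have "a \<in> lists S" "b \<in> lists S" using calculation I by auto
      ultimately show ?case using wprod_append_words by (metis append_in_lists_conv image_eqI)
    qed
  qed
  show "wprod G ` lists I \<subseteq> parabolic G I"
  proof
    fix h assume "h \<in> wprod G ` lists I"
    then obtain a where a: "a \<in> lists I" "h = wprod G a" by blast
    have "wprod G a \<in> generate G I" using a(1) by (induct a) (auto intro: generate.intros)
    then show "h \<in> parabolic G I" using a by (simp add: parabolic_def)
  qed
qed

lemma carrier_eq_wprod_lists: "carrier G = wprod G ` lists S"
  using coxeter_system parabolic_eq_wprod_lists[of S]
  by (simp add: coxeter_system_def parabolic_def)

lemma subgroup_parabolic: "I \<subseteq> S \<Longrightarrow> subgroup (parabolic G I) G"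
  unfolding parabolic_def by (rule generate_is_subgroup) (use gen_closed in blast)

lemma parabolic_closed: "I \<subseteq> S \<Longrightarrow> w \<in> parabolic G I \<Longrightarrow> w \<in> carrier G"
  by (rule subgroup.mem_carrier[OF subgroup_parabolic])

lemma gen_in_parabolic: "s \<in> I \<Longrightarrow> s \<in> parabolic G I"
  unfolding parabolic_def by (rule generate.incl)

lemma parabolic_mono: "J \<subseteq> I \<Longrightarrow> parabolic G J \<subseteq> parabolic G I"
  unfolding parabolic_def by (rule mono_generate)

lemma len_wprod_le: "a \<in> lists S \<Longrightarrow> len (wprod G a) \<le> length a"
  unfolding cox_len_def by (rule Least_le) blast

lemma reduced_word_exists: "w \<in> carrier G \<Longrightarrow> \<exists>a\<in>lists S. length a = len w \<and> wprod G a = w"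
proof -
  assume "w \<in> carrier G"
  then obtain a where "a \<in> lists S" "wprod G a = w" using carrier_eq_wprod_lists by auto
  then have "\<exists>n. \<exists>a\<in>lists S. length a = n \<and> wprod G a = w" by blast
  then show ?thesis unfolding cox_len_def by (rule LeastI_ex)
qed

lemma len_inv: "w \<in> carrier G \<Longrightarrow> len (inv w) = len w"
proof -
  have le: "len (inv w) \<le> len w" if w: "w \<in> carrier G" for w
  proof -
    obtain a where a: "a \<in> lists S" "length a = len w" "wprod G a = w"
      using reduced_word_exists[OF w] by blast
    then show ?thesis using len_wprod_le[of "rev a"] wprod_rev by (simp add: in_lists_conv_set)
  qed
  show "w \<in> carrier G \<Longrightarrow> len (inv w) = len w" using le[of w] le[of "inv w"] by simp
qed

lemma len_mult_le: "a \<in> carrier G \<Longrightarrow> b \<in> carrier G \<Longrightarrow> len (a \<otimes> b) \<le> len a + len b"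
proof -
  assume a: "a \<in> carrier G" and b: "b \<in> carrier G"
  obtain x where x: "x \<in> lists S" "length x = len a" "wprod G x = a"
    using reduced_word_exists[OF a] by blast
  obtain y where y: "y \<in> lists S" "length y = len b" "wprod G y = b"
    using reduced_word_exists[OF b] by blast
  show ?thesis using x y len_wprod_le[of "x @ y"] wprod_append_words by simp
qed

lemma len_one: "len \<one> = 0"
  using len_wprod_le[of "[]"] by simp

lemma len_eq_0D: "w \<in> carrier G \<Longrightarrow> len w = 0 \<Longrightarrow> w = \<one>"
  using reduced_word_exists[of w] by auto

lemma len_gen: "s \<in> S \<Longrightarrow> len s = 1"
  using len_wprod_le[of "[s]"] len_eq_0D[of s] gen_neq_one gen_closed by fastforce

lemma reduced_append:
  assumes a: "a \<in> lists S" and b: "b \<in> lists S" and ab: "length (a @ b) = len (wprod G (a @ b))"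
  shows "length a = len (wprod G a)" and "length b = len (wprod G b)"
proof -
  have "length (a @ b) \<le> len (wprod G a) + len (wprod G b)"
    using ab len_mult_le wprod_closed_words[OF a] wprod_closed_words[OF b]
      wprod_append_words[OF a b]
    by simp
  then show "length a = len (wprod G a)" and "length b = len (wprod G b)"
    using len_wprod_le[OF a] len_wprod_le[OF b] by simp_all
qed

lemma conj_mult_wprod_delete:
  assumes "xs @ y # zs \<in> lists S"
  shows "(wprod G xs \<otimes> y \<otimes> inv (wprod G xs)) \<otimes> wprod G (xs @ y # zs) = wprod G (xs @ zs)"
proof -
  have xs: "xs \<in> lists S" and y: "y \<in> S" and zs: "zs \<in> lists S" using assms by auto
  have X: "wprod G xs \<in> carrier G" and Z: "wprod G zs \<in> carrier G" and yc: "y \<in> carrier G"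
    using xs zs y wprod_closed_words gen_closed by auto
  have cancel: "inv (wprod G xs) \<otimes> (wprod G xs \<otimes> q) = q" if "q \<in> carrier G" for q
    using X that by (simp add: m_assoc[symmetric])
  have "(wprod G xs \<otimes> y \<otimes> inv (wprod G xs)) \<otimes> wprod G (xs @ y # zs)
      = wprod G xs \<otimes> (y \<otimes> y) \<otimes> wprod G zs"
    using wprod_append_words[of xs "y # zs"] xs y zs X Z yc by (simp add: m_assoc cancel)
  also have "\<dots> = wprod G (xs @ zs)" using gen_square[OF y] X Z wprod_append_words[OF xs zs] by simp
  finally show ?thesis .
qed

lemma gen_conj_conj: "s \<in> S \<Longrightarrow> q \<in> carrier G \<Longrightarrow> s \<otimes> (s \<otimes> q \<otimes> s) \<otimes> s = q"
  using gen_closed gen_square by (simp add: m_assoc[symmetric]) (simp add: m_assoc)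

lemma inversion_set_Cons:
  assumes y: "y \<in> S" and ny: "y \<notin> inversion_set G a"
  shows "inversion_set G (y # a) = insert y ((\<lambda>q. y \<otimes> q \<otimes> y) ` inversion_set G a)"
proof -
  let ?f = "\<lambda>q. y \<otimes> q \<otimes> y"
  have yc: "y \<in> carrier G" using y by (rule gen_closed)
  show ?thesis
  proof (intro equalityI subsetI)
    fix r assume "r \<in> inversion_set G (y # a)"
    then have r: "r \<in> carrier G" "(y = r) \<noteq> refl_parity G a (?f r)"
      by (simp_all add: inversion_set_def inv_gen[OF y])
    show "r \<in> insert y (?f ` inversion_set G a)"
    proof (cases "r = y")
      case False
      then have "?f r \<in> inversion_set G a" using r yc by (simp add: inversion_set_def)
      then show ?thesis using gen_conj_conj[OF y r(1)] by (metis image_eqI insertI2)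
    qed simp
  next
    fix r assume "r \<in> insert y (?f ` inversion_set G a)"
    then consider "r = y" | q where "q \<in> inversion_set G a" "r = ?f q" "r \<noteq> y" by blast
    then show "r \<in> inversion_set G (y # a)"
    proof cases
      case 1 then show ?thesis
        using ny yc gen_square[OF y] by (simp add: inversion_set_def inv_gen[OF y])
    next
      case 2 then show ?thesis
        using gen_conj_conj[OF y] yc by (auto simp: inversion_set_def inv_gen[OF y])
    qed
  qed
qed

lemma card_inversion_set_Cons:
  assumes y: "y \<in> S" and a: "a \<in> lists S" and ny: "y \<notin> inversion_set G a"
  shows "card (inversion_set G (y # a)) = Suc (card (inversion_set G a))"
proof -
  let ?f = "\<lambda>q. y \<otimes> q \<otimes> y"
  have "?f y = y" using gen_closed[OF y] gen_square[OF y] by simp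
  then have "y \<notin> ?f ` inversion_set G a"
    using ny gen_conj_conj[OF y] by (force simp: inversion_set_def)
  moreover have "inj_on ?f (inversion_set G a)"
    by (rule inj_on_inverseI[where g = ?f]) (simp add: gen_conj_conj[OF y] inversion_set_def)
  ultimately show ?thesis
    using finite_inversion_set[OF words_closed[OF a]] inversion_set_Cons[OF y ny]
    by (simp add: card_image)
qed

lemma card_inversion_set_reduced:
  "c \<in> lists S \<Longrightarrow> length c = len (wprod G c) \<Longrightarrow> card (inversion_set G c) = length c"
proof (induct c)
  case Nil then show ?case by (simp add: inversion_set_def)
next
  case (Cons y c)
  have y: "y \<in> S" and c: "c \<in> lists S" using Cons.prems by auto
  have rc: "length c = len (wprod G c)" using reduced_append(2)[of "[y]" c] Cons.prems by simp
  have "y \<notin> inversion_set G c"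
  proof
    assume "y \<in> inversion_set G c"
    then have "refl_parity G c y" by (simp add: inversion_set_def)
    then obtain xs z zs where h: "c = xs @ z # zs" "y = wprod G xs \<otimes> z \<otimes> inv (wprod G xs)"
      using refl_parity_split[OF words_closed[OF c] gen_closed[OF y]] by blast
    have "wprod G (y # c) = wprod G (xs @ zs)" using conj_mult_wprod_delete[of xs z zs] h c by simp
    then have "len (wprod G (y # c)) \<le> length (xs @ zs)"
      using len_wprod_le[of "xs @ zs"] h c by simp
    then show False using Cons.prems(2) h by simp
  qed
  then show ?case using card_inversion_set_Cons[OF y c] Cons.hyps[OF c rc] rc by simp
qed

lemma left_exchange:
  assumes c: "c \<in> lists S" and rc: "length c = len (wprod G c)" and s: "s \<in> S"
    and shorter: "len (s \<otimes> wprod G c) \<le> length c"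
  shows "\<exists>xs z zs. c = xs @ z # zs \<and> s \<otimes> wprod G c = wprod G (xs @ zs)"
proof -
  have sc: "s \<in> carrier G" using gen_closed[OF s] .
  \<comment> \<open>otherwise s # c has length c + 1 inversions, yet shares its inversion set with a
    reduced word of its product, which is no longer than c\<close>
  have "refl_parity G c s"
  proof (rule ccontr)
    assume "\<not> refl_parity G c s"
    then have "card (inversion_set G (s # c)) = Suc (length c)"
      using card_inversion_set_Cons[OF s c] card_inversion_set_reduced[OF c rc]
      by (simp add: inversion_set_def)
    moreover obtain d where d: "d \<in> lists S" "length d = len (s \<otimes> wprod G c)"
      "wprod G d = s \<otimes> wprod G c"
      using reduced_word_exists[of "s \<otimes> wprod G c"] sc wprod_closed_words[OF c] by blast
    moreover have "inversion_set G d = inversion_set G (s # c)"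
      using refl_parity_wprod_eq[OF d(1), of "s # c"] s c d(3) by (auto simp: inversion_set_def)
    ultimately show False
      using card_inversion_set_reduced[OF d(1)] d(2) shorter by simp
  qed
  then obtain xs z zs where h: "c = xs @ z # zs" "s = wprod G xs \<otimes> z \<otimes> inv (wprod G xs)"
    using refl_parity_split[OF words_closed[OF c] sc] by blast
  then have "s \<otimes> wprod G c = wprod G (xs @ zs)" using conj_mult_wprod_delete[of xs z zs] c by simp
  then show ?thesis using h by blast
qed

lemma right_exchange:
  assumes c: "c \<in> lists S" and rc: "length c = len (wprod G c)" and s: "s \<in> S"
    and shorter: "len (wprod G c \<otimes> s) \<le> length c"
  shows "\<exists>xs z zs. c = xs @ z # zs \<and> wprod G c \<otimes> s = wprod G (xs @ zs)"
proof -
  have sc: "s \<in> carrier G" and C: "wprod G c \<in> carrier G"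
    using gen_closed[OF s] wprod_closed_words[OF c] by auto
  have rev_c: "rev c \<in> lists S" using c by (simp add: in_lists_conv_set)
  have inv_sc: "inv (wprod G c \<otimes> s) = s \<otimes> wprod G (rev c)"
    using sc C inv_gen[OF s] wprod_rev[OF c] by (simp add: inv_mult_group)
  have "length (rev c) = len (wprod G (rev c))" using wprod_rev[OF c] len_inv[OF C] rc by simp
  moreover have "len (s \<otimes> wprod G (rev c)) \<le> length (rev c)"
    using inv_sc len_inv[of "wprod G c \<otimes> s"] sc C shorter by simp
  ultimately obtain xs z zs where h: "rev c = xs @ z # zs" "s \<otimes> wprod G (rev c) = wprod G (xs @ zs)"
    using left_exchange[OF rev_c _ s] by blast
  have xz: "xs @ zs \<in> lists S" using h(1) rev_c by (metis Cons_in_lists_iff append_in_lists_conv)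
  have "c = rev zs @ z # rev xs"
    using h(1) by (metis rev_append rev_rev_ident rev.simps(2) append_assoc append_Cons append_Nil)
  moreover have "wprod G c \<otimes> s = wprod G (rev zs @ rev xs)"
    using inv_sc h(2) wprod_rev[OF xz] sc C by (metis inv_inv m_closed rev_append)
  ultimately show ?thesis by blast
qed

lemma right_exchange_append:
  assumes a: "a \<in> lists S" and b: "b \<in> lists S" and red: "length (a @ b) = len (wprod G (a @ b))"
    and s: "s \<in> S" and shorter: "len (wprod G (a @ b) \<otimes> s) \<le> length (a @ b)"
  shows "(\<exists>b'\<in>lists S. length b' < length b \<and> wprod G b \<otimes> s = wprod G b') \<or>
         (\<exists>a'\<in>lists S. length a' < length a \<and>
            wprod G a \<otimes> (wprod G b \<otimes> s \<otimes> inv (wprod G b)) = wprod G a')"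
proof -
  have sc: "s \<in> carrier G" and A: "wprod G a \<in> carrier G" and B: "wprod G b \<in> carrier G"
    using gen_closed[OF s] wprod_closed_words a b by auto
  have ab: "a @ b \<in> lists S" using a b by simp
  obtain xs z zs where h: "a @ b = xs @ z # zs" "wprod G (a @ b) \<otimes> s = wprod G (xs @ zs)"
    using right_exchange[OF ab red s shorter] by blast
  have xsS: "xs \<in> lists S" and zsS: "zs \<in> lists S"
    using h(1) ab by (metis Cons_in_lists_iff append_in_lists_conv)+
  from append_eq_append_Cons_cases[OF h(1)] show ?thesis
  proof (elim disjE exE conjE)
    fix us assume us: "xs = a @ us" "b = us @ z # zs"
    have usS: "us \<in> lists S" using us(1) xsS by simp
    have "wprod G a \<otimes> (wprod G b \<otimes> s) = wprod G a \<otimes> wprod G (us @ zs)"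
      using h(2) us(1) wprod_append_words[of a b] wprod_append_words[of a "us @ zs"]
        a b usS zsS A B sc
      by (simp add: m_assoc)
    then have "wprod G b \<otimes> s = wprod G (us @ zs)" using A B sc usS zsS wprod_closed_words by simp
    then show ?thesis using us(2) usS zsS by (intro disjI1 bexI[of _ "us @ zs"]) simp_all
  next
    fix us assume us: "a = xs @ z # us" "zs = us @ b"
    have usS: "us \<in> lists S" using us(1) a by simp
    have U: "wprod G (xs @ us) \<in> carrier G" using usS xsS wprod_closed_words by simp
    have "wprod G a \<otimes> wprod G b \<otimes> s = wprod G (xs @ us) \<otimes> wprod G b"
      using h(2) us(2) wprod_append_words[of a b] wprod_append_words[of "xs @ us" b] a b usS xsS
      by simp
    then have "wprod G a \<otimes> (wprod G b \<otimes> s \<otimes> inv (wprod G b)) = wprod G (xs @ us)"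
      using A B sc U by (simp add: m_assoc[symmetric]) (simp add: m_assoc)
    then show ?thesis using us(1) usS xsS by (intro disjI2 bexI[of _ "xs @ us"]) simp_all
  qed
qed

lemma len_gen_mult_ge: "s \<in> S \<Longrightarrow> w \<in> carrier G \<Longrightarrow> len w \<le> Suc (len (s \<otimes> w))"
  using len_mult_le[of s "s \<otimes> w"] gen_closed[of s] len_gen[of s] gen_square[of s]
  by (simp add: m_assoc[symmetric])

lemma reduced_word_in_parabolic:
  assumes I: "I \<subseteq> S" and w: "w \<in> parabolic G I"
  shows "\<exists>c\<in>lists I. wprod G c = w \<and> length c = len w"
proof -
  obtain a where a: "a \<in> lists I" "wprod G a = w" using w parabolic_eq_wprod_lists[OF I] by auto
  \<comment> \<open>prepending a letter to a reduced word keeps it reduced or, by exchange, deletes a letter\<close>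
  have "\<exists>c\<in>lists I. wprod G c = wprod G a \<and> length c = len (wprod G a)"
    using a(1)
  proof (induction a)
    case Nil then show ?case using len_one by auto
  next
    case (Cons y a)
    then obtain c where c: "c \<in> lists I" "wprod G c = wprod G a" "length c = len (wprod G a)"
      by auto
    have y: "y \<in> S" and cS: "c \<in> lists S" using Cons.hyps c(1) I by auto
    let ?w = "y \<otimes> wprod G c"
    show ?case
    proof (cases "len ?w = Suc (length c)")
      case True then show ?thesis using c Cons.hyps by (intro bexI[of _ "y # c"]) auto
    next
      case False
      then have "len ?w \<le> length c" using len_wprod_le[of "y # c"] cS y by simp
      then obtain xs z zs where xz: "c = xs @ z # zs" "?w = wprod G (xs @ zs)"
        using left_exchange[OF cS _ y] c by auto
      moreover have "length c \<le> Suc (len ?w)"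
        using len_gen_mult_ge[OF y] wprod_closed_words[OF cS] c by simp
      moreover have xzI: "xs @ zs \<in> lists I" using xz(1) c(1) by simp
      moreover have "len (wprod G (xs @ zs)) \<le> length (xs @ zs)"
        using len_wprod_le lists_mono[OF I] xzI by blast
      ultimately show ?thesis using c by (intro bexI[of _ "xs @ zs"]) auto
    qed
  qed
  then show ?thesis using a(2) by simp
qed

lemma gen_in_parabolic_iff: "I \<subseteq> S \<Longrightarrow> s \<in> S \<Longrightarrow> s \<in> parabolic G I \<longleftrightarrow> s \<in> I"
proof
  assume I: "I \<subseteq> S" and s: "s \<in> S" and "s \<in> parabolic G I"
  then obtain c where c: "c \<in> lists I" "wprod G c = s" "length c = 1"
    using reduced_word_in_parabolic len_gen by metis
  then obtain i where "c = [i]" by (cases c) auto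
  then show "s \<in> I" using c I gen_closed by auto
qed (rule gen_in_parabolic)

lemma set_reduced_word_subset_if_mem_parabolic:
  "I \<subseteq> S \<Longrightarrow> c \<in> lists S \<Longrightarrow> length c = len (wprod G c) \<Longrightarrow> wprod G c \<in> parabolic G I \<Longrightarrow>
   set c \<subseteq> I"
proof (induct c rule: rev_induct)
  case Nil then show ?case by simp
next
  case (snoc s c)
  have I: "I \<subseteq> S" and s: "s \<in> S" and c: "c \<in> lists S" using snoc.prems by auto
  have sc: "s \<in> carrier G" and C: "wprod G c \<in> carrier G"
    using gen_closed[OF s] wprod_closed_words[OF c] .
  let ?w = "wprod G (c @ [s])"
  have w: "?w = wprod G c \<otimes> s" using wprod_append_words[of c "[s]"] c s sc by simp
  have ws: "?w \<otimes> s = wprod G c" using w C sc gen_square[OF s] by (simp add: m_assoc)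
  have rc: "length c = len (wprod G c)" using reduced_append(1)[of c "[s]"] snoc.prems s by simp
  obtain b where b: "b \<in> lists I" "wprod G b = ?w" "length b = len ?w"
    using reduced_word_in_parabolic[OF I snoc.prems(4)] by blast
  have bS: "b \<in> lists S" using b(1) I by auto
  \<comment> \<open>w s arises from a reduced word over I by deleting a letter, so it lies in W_I, and so does s\<close>
  obtain xs z zs where h: "b = xs @ z # zs" "wprod G b \<otimes> s = wprod G (xs @ zs)"
    using right_exchange[OF bS _ s] b ws rc snoc.prems(3) by fastforce
  have "xs @ zs \<in> lists I" using h(1) b(1) by simp
  then have "wprod G c \<in> parabolic G I" using h b(2) ws parabolic_eq_wprod_lists[OF I] by auto
  then have "s \<in> parabolic G I"
    using subgroup_parabolic[OF I] snoc.prems(4) w C sc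
    by (metis subgroup.m_inv_closed subgroup.m_closed inv_solve_left m_closed inv_closed)
  then show ?case
    using snoc.hyps[OF I c rc] gen_in_parabolic_iff[OF I s] \<open>wprod G c \<in> parabolic G I\<close>
    by simp
qed

lemma supp_subset_gens: "supp G S w \<subseteq> S"
  by (auto simp: supp_def reduced_word_def)

lemma mem_parabolic_supp: "w \<in> carrier G \<Longrightarrow> w \<in> parabolic G (supp G S w)"
proof -
  assume w: "w \<in> carrier G"
  obtain c where c: "c \<in> lists S" "length c = len w" "wprod G c = w"
    using reduced_word_exists[OF w] by blast
  then have "c \<in> lists (supp G S w)" by (auto simp: supp_def reduced_word_def)
  then show ?thesis using parabolic_eq_wprod_lists[OF supp_subset_gens] c by auto
qed

lemma supp_subset_if_mem_parabolic:
  assumes I: "I \<subseteq> S" and w: "w \<in> parabolic G I"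
  shows "supp G S w \<subseteq> I"
proof
  fix s assume "s \<in> supp G S w"
  then obtain c where c: "reduced_word G S c w" "s \<in> set c" by (auto simp: supp_def)
  then have "set c \<subseteq> I"
    using set_reduced_word_subset_if_mem_parabolic[OF I] w by (auto simp: reduced_word_def)
  then show "s \<in> I" using c by blast
qed

definition coset_minimal :: "'a set \<Rightarrow> 'a \<Rightarrow> bool" where
  "coset_minimal I x \<longleftrightarrow> x \<in> carrier G \<and> (\<forall>z\<in>parabolic G I. len x \<le> len (x \<otimes> z))"

lemma coset_minimal_len_mult_gen:
  assumes I: "I \<subseteq> S" and x: "coset_minimal I x" and y: "y \<in> parabolic G I"
    and xy: "len (x \<otimes> y) = len x + len y" and s: "s \<in> I" and ys: "len (y \<otimes> s) = Suc (len y)"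
  shows "len (x \<otimes> y \<otimes> s) = Suc (len (x \<otimes> y))"
proof (rule ccontr)
  assume ne: "len (x \<otimes> y \<otimes> s) \<noteq> Suc (len (x \<otimes> y))"
  have sS: "s \<in> S" using s I by blast
  have xc: "x \<in> carrier G" and yc: "y \<in> carrier G" and sc: "s \<in> carrier G"
    using x parabolic_closed[OF I y] gen_closed[OF sS] by (auto simp: coset_minimal_def)
  have shorter: "len (x \<otimes> y \<otimes> s) \<le> len (x \<otimes> y)"
    using ne len_mult_le[of "x \<otimes> y" s] len_gen[OF sS] xc yc sc by simp
  obtain cx where cx: "cx \<in> lists S" "length cx = len x" "wprod G cx = x"
    using reduced_word_exists[OF xc] by blast
  obtain cy where cy: "cy \<in> lists S" "length cy = len y" "wprod G cy = y"
    using reduced_word_exists[OF yc] by blast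
  have "wprod G (cx @ cy) = x \<otimes> y" using wprod_append_words cx cy by simp
  then have "(\<exists>b\<in>lists S. length b < length cy \<and> y \<otimes> s = wprod G b) \<or>
      (\<exists>a\<in>lists S. length a < length cx \<and> x \<otimes> (y \<otimes> s \<otimes> inv y) = wprod G a)"
    using right_exchange_append[OF cx(1) cy(1) _ sS] xy cx cy shorter by simp
  then show False
  proof (elim disjE bexE conjE)
    fix b assume "b \<in> lists S" "length b < length cy" "y \<otimes> s = wprod G b"
    then show False using len_wprod_le[of b] ys cy(2) by simp
  next
    fix a assume a: "a \<in> lists S" "length a < length cx" "x \<otimes> (y \<otimes> s \<otimes> inv y) = wprod G a"
    have "y \<otimes> s \<otimes> inv y \<in> parabolic G I"
      using subgroup_parabolic[OF I] y gen_in_parabolic[OF s]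
      by (simp add: subgroup.m_closed subgroup.m_inv_closed)
    then have "len x \<le> len (wprod G a)" using x a(3) by (auto simp: coset_minimal_def)
    then show False using len_wprod_le[OF a(1)] a(2) cx(2) by simp
  qed
qed

lemma coset_minimal_len_mult:
  assumes I: "I \<subseteq> S" and x: "coset_minimal I x" and y: "y \<in> parabolic G I"
  shows "len (x \<otimes> y) = len x + len y"
proof -
  have xc: "x \<in> carrier G" using x by (simp add: coset_minimal_def)
  have "len (x \<otimes> wprod G c) = len x + len (wprod G c)"
    if "c \<in> lists I" "length c = len (wprod G c)" for c
    using that
  proof (induct c rule: rev_induct)
    case Nil then show ?case using xc len_one by simp
  next
    case (snoc s c)
    have s: "s \<in> I" and c: "c \<in> lists I" using snoc.prems(1) by auto
    have sS: "s \<in> S" and cS: "c \<in> lists S" using s c I by auto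
    have prod: "wprod G (c @ [s]) = wprod G c \<otimes> s"
      using wprod_append_words[of c "[s]"] cS sS gen_closed by simp
    have rc: "length c = len (wprod G c)"
      using reduced_append(1)[of c "[s]"] snoc.prems cS sS by simp
    have "len (wprod G c \<otimes> s) = Suc (len (wprod G c))" using snoc.prems(2) prod rc by simp
    moreover have "wprod G c \<in> parabolic G I" using c parabolic_eq_wprod_lists[OF I] by blast
    moreover have IH: "len (x \<otimes> wprod G c) = len x + len (wprod G c)" using snoc.hyps[OF c rc] .
    ultimately show ?case
      using coset_minimal_len_mult_gen[OF I x _ IH s] prod xc gen_closed[OF sS]
        wprod_closed_words[OF cS]
      by (simp add: m_assoc)
  qed
  moreover obtain c where "c \<in> lists I" "wprod G c = y" "length c = len y"
    using reduced_word_in_parabolic[OF I y] by blast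
  ultimately show ?thesis by blast
qed

lemma coset_minimal_exists:
  assumes I: "I \<subseteq> S" and w: "w \<in> carrier G"
  shows "\<exists>x y. coset_minimal I x \<and> y \<in> parabolic G I \<and> w = x \<otimes> y"
proof -
  let ?P = "\<lambda>n. \<exists>z\<in>parabolic G I. len (w \<otimes> z) = n"
  have "?P (len w)"
    using w subgroup.one_closed[OF subgroup_parabolic[OF I]] by (intro bexI[of _ \<one>]) simp_all
  then have "?P (LEAST n. ?P n)" by (rule LeastI)
  then obtain z0 where z0: "z0 \<in> parabolic G I" "len (w \<otimes> z0) = (LEAST n. ?P n)" by blast
  have z0c: "z0 \<in> carrier G" using parabolic_closed[OF I z0(1)] .
  have "coset_minimal I (w \<otimes> z0)"
    unfolding coset_minimal_def
  proof (intro conjI ballI)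
    show "w \<otimes> z0 \<in> carrier G" using w z0c by simp
    fix z assume z: "z \<in> parabolic G I"
    have "z0 \<otimes> z \<in> parabolic G I" using subgroup.m_closed[OF subgroup_parabolic[OF I] z0(1) z] .
    then have "?P (len (w \<otimes> (z0 \<otimes> z)))" by blast
    then have "(LEAST n. ?P n) \<le> len (w \<otimes> (z0 \<otimes> z))" by (rule Least_le)
    then show "len (w \<otimes> z0) \<le> len (w \<otimes> z0 \<otimes> z)"
      using z0 w z0c parabolic_closed[OF I z] by (simp add: m_assoc)
  qed
  moreover have "inv z0 \<in> parabolic G I"
    using subgroup_parabolic[OF I] z0(1) by (rule subgroup.m_inv_closed)
  moreover have "w = (w \<otimes> z0) \<otimes> inv z0" using w z0c by (simp add: m_assoc)
  ultimately show ?thesis by blast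
qed

lemma coset_minimal_imp_min_reps:
  assumes I: "I \<subseteq> S" and x: "coset_minimal I x"
  shows "x \<in> min_reps G S I"
  unfolding min_reps_def
proof (intro CollectI conjI ballI)
  show "x \<in> carrier G" using x by (simp add: coset_minimal_def)
  fix s assume "s \<in> I"
  then show "len x < len (x \<otimes> s)"
    using coset_minimal_len_mult[OF I x gen_in_parabolic] len_gen I by auto
qed

lemma min_reps_imp_coset_minimal:
  assumes I: "I \<subseteq> S" and x: "x \<in> min_reps G S I"
  shows "coset_minimal I x"
proof -
  have xc: "x \<in> carrier G" using x by (simp add: min_reps_def)
  obtain x0 y where h: "coset_minimal I x0" "y \<in> parabolic G I" "x = x0 \<otimes> y"
    using coset_minimal_exists[OF I xc] by blast
  have x0c: "x0 \<in> carrier G" using h(1) by (simp add: coset_minimal_def)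
  show ?thesis
  proof (cases "y = \<one>")
    case True then show ?thesis using h x0c by simp
  next
    case False
    \<comment> \<open>otherwise the last letter s of a reduced word of y over I gives len (x s) < len x\<close>
    obtain r where r: "r \<in> lists I" "wprod G r = y" "length r = len y"
      using reduced_word_in_parabolic[OF I h(2)] by blast
    then obtain r' s where rs: "r = r' @ [s]" using False by (cases r rule: rev_exhaust) auto
    have sI: "s \<in> I" and r'S: "r' \<in> lists S" and sS: "s \<in> S" using r(1) rs I by auto
    let ?y' = "wprod G r'"
    have y'c: "?y' \<in> carrier G" using wprod_closed_words[OF r'S] .
    have "y = ?y' \<otimes> s"
      using r(2) rs wprod_append_words[of r' "[s]"] r'S sS gen_closed[OF sS] by simp
    then have "x \<otimes> s = x0 \<otimes> ?y'"
      using h(3) x0c y'c gen_closed[OF sS] gen_square[OF sS] by (simp add: m_assoc)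
    then have "len (x \<otimes> s) \<le> len x0 + len ?y'" using len_mult_le[OF x0c y'c] by simp
    also have "\<dots> < len x"
      using coset_minimal_len_mult[OF I h(1,2)] h(3) len_wprod_le[OF r'S] r(3) rs by simp
    finally show ?thesis using x sI by (auto simp: min_reps_def)
  qed
qed

lemma min_reps_closed: "x \<in> min_reps G S I \<Longrightarrow> x \<in> carrier G"
  by (simp add: min_reps_def)

lemma len_min_reps_mult:
  assumes I: "I \<subseteq> S" and x: "x \<in> min_reps G S I" and y: "y \<in> parabolic G I"
  shows "len (x \<otimes> y) = len x + len y"
  using coset_minimal_len_mult[OF I min_reps_imp_coset_minimal[OF I x] y] .

lemma min_reps_decomposition:
  assumes I: "I \<subseteq> S" and w: "w \<in> carrier G"
  shows "\<exists>x\<in>min_reps G S I. \<exists>y\<in>parabolic G I. w = x \<otimes> y"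
  using coset_minimal_exists[OF I w] coset_minimal_imp_min_reps[OF I] by blast

lemma min_reps_decomposition_unique:
  assumes I: "I \<subseteq> S" and x: "x \<in> min_reps G S I" and x': "x' \<in> min_reps G S I"
    and y: "y \<in> parabolic G I" and y': "y' \<in> parabolic G I" and eq: "x \<otimes> y = x' \<otimes> y'"
  shows "x = x' \<and> y = y'"
proof -
  have xc: "x \<in> carrier G" and x'c: "x' \<in> carrier G" using x x' min_reps_closed by auto
  have yc: "y \<in> carrier G" and y'c: "y' \<in> carrier G" using y y' parabolic_closed[OF I] by auto
  let ?z = "y \<otimes> inv y'"
  have z: "?z \<in> parabolic G I" and z': "inv ?z \<in> parabolic G I"
    using subgroup_parabolic[OF I] y y' by (simp_all add: subgroup.m_closed subgroup.m_inv_closed)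
  have zc: "?z \<in> carrier G" using yc y'c by simp
  have x'_eq: "x' = x \<otimes> ?z"
  proof -
    have "x \<otimes> ?z = x \<otimes> y \<otimes> inv y'" using xc yc y'c by (simp add: m_assoc)
    also have "\<dots> = x'" using eq x'c y'c by (simp add: m_assoc)
    finally show ?thesis by simp
  qed
  have x_eq: "x = x' \<otimes> inv ?z" using x'_eq xc zc by (simp add: m_assoc)
  \<comment> \<open>lengths add in both directions, so the connecting element has length 0\<close>
  have "len x' = len x + len ?z" using x'_eq len_min_reps_mult[OF I x z] by simp
  moreover have "len x = len x' + len ?z"
    using x_eq len_min_reps_mult[OF I x' z'] len_inv[OF zc] by simp
  ultimately have "?z = \<one>" using len_eq_0D[OF zc] by simp
  then have "y = y'" using inv_equality[of y "inv y'"] yc y'c by simp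
  then show ?thesis using eq xc x'c yc by simp
qed

lemma par_comp_eq:
  assumes I: "I \<subseteq> S" and x: "x \<in> min_reps G S I" and y: "y \<in> parabolic G I"
  shows "par_comp G S I (x \<otimes> y) = y"
  unfolding par_comp_def
proof (rule the_equality)
  have xc: "x \<in> carrier G" and yc: "y \<in> carrier G"
    using min_reps_closed[OF x] parabolic_closed[OF I y] .
  show "y \<in> parabolic G I \<and> x \<otimes> y \<otimes> inv y \<in> min_reps G S I" using x y xc yc by (simp add: m_assoc)
  fix y2 assume h: "y2 \<in> parabolic G I \<and> x \<otimes> y \<otimes> inv y2 \<in> min_reps G S I"
  have "(x \<otimes> y \<otimes> inv y2) \<otimes> y2 = x \<otimes> y" using xc yc parabolic_closed[OF I] h by (simp add: m_assoc)
  then show "y2 = y" using min_reps_decomposition_unique[OF I _ x _ y] h by blast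
qed

lemma min_reps_antimono: "J \<subseteq> I \<Longrightarrow> min_reps G S I \<subseteq> min_reps G S J"
  by (auto simp: min_reps_def)

lemma supp_subset_supp_mult:
  assumes I: "I \<subseteq> S" and x: "x \<in> min_reps G S I" and y: "y \<in> parabolic G I"
  shows "supp G S y \<subseteq> supp G S (x \<otimes> y)"
proof
  fix s assume "s \<in> supp G S y"
  then obtain r where r: "reduced_word G S r y" "s \<in> set r" by (auto simp: supp_def)
  obtain cx where cx: "cx \<in> lists S" "length cx = len x" "wprod G cx = x"
    using reduced_word_exists[OF min_reps_closed[OF x]] by blast
  have "reduced_word G S (cx @ r) (x \<otimes> y)"
    using r cx len_min_reps_mult[OF I x y] wprod_append_words[of cx r]
    by (simp add: reduced_word_def)
  then show "s \<in> supp G S (x \<otimes> y)" using r(2) by (auto simp: supp_def)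
qed

lemma min_reps_mult_mem:
  assumes J: "J \<subseteq> I" and I: "I \<subseteq> S" and x: "x \<in> min_reps G S I"
    and x': "x' \<in> min_reps G S J" and x'I: "x' \<in> parabolic G I"
  shows "x \<otimes> x' \<in> min_reps G S J"
  unfolding min_reps_def
proof (intro CollectI conjI ballI)
  have xc: "x \<in> carrier G" and x'c: "x' \<in> carrier G" using x x' min_reps_closed by auto
  then show "x \<otimes> x' \<in> carrier G" by simp
  fix s assume s: "s \<in> J"
  have sI: "s \<in> parabolic G I" using s J gen_in_parabolic by blast
  have "len (x \<otimes> x') = len x + len x'" using len_min_reps_mult[OF I x x'I] .
  also have "\<dots> < len x + len (x' \<otimes> s)" using x' s by (simp add: min_reps_def)
  also have "\<dots> = len (x \<otimes> (x' \<otimes> s))"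
    using len_min_reps_mult[OF I x] subgroup.m_closed[OF subgroup_parabolic[OF I] x'I sI] by simp
  finally show "len (x \<otimes> x') < len (x \<otimes> x' \<otimes> s)"
    using xc x'c gen_closed J I s by (simp add: m_assoc subset_iff)
qed

lemma par_comp_par_comp:
  assumes J: "J \<subseteq> I" and I: "I \<subseteq> S" and v: "v \<in> carrier G"
  shows "par_comp G S J (par_comp G S I v) = par_comp G S J v"
proof -
  have JS: "J \<subseteq> S" using J I by blast
  obtain x y where xy: "x \<in> min_reps G S I" "y \<in> parabolic G I" "v = x \<otimes> y"
    using min_reps_decomposition[OF I v] by blast
  have xc: "x \<in> carrier G" and yc: "y \<in> carrier G"
    using min_reps_closed[OF xy(1)] parabolic_closed[OF I xy(2)] .
  obtain x' y' where xy': "x' \<in> min_reps G S J" "y' \<in> parabolic G J" "y = x' \<otimes> y'"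
    using min_reps_decomposition[OF JS yc] by blast
  have x'c: "x' \<in> carrier G" and y'c: "y' \<in> carrier G"
    using min_reps_closed[OF xy'(1)] parabolic_closed[OF JS xy'(2)] .
  have "y \<otimes> inv y' \<in> parabolic G I"
    using subgroup_parabolic[OF I] xy(2) parabolic_mono[OF J] xy'(2)
    by (auto intro: subgroup.m_closed subgroup.m_inv_closed)
  then have "x' \<in> parabolic G I" using xy'(3) x'c y'c by (simp add: m_assoc)
  then have "x \<otimes> x' \<in> min_reps G S J" using min_reps_mult_mem[OF J I xy(1) xy'(1)] by blast
  moreover have "v = (x \<otimes> x') \<otimes> y'" using xy xy' xc x'c y'c by (simp add: m_assoc)
  ultimately show ?thesis using par_comp_eq[OF JS _ xy'(2)] par_comp_eq[OF JS xy'(1,2)]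
    par_comp_eq[OF I xy(1,2)] xy(3) xy'(3) by simp
qed

lemma cox_le_iff:
  assumes u: "u \<in> carrier G" and v: "v \<in> carrier G"
  shows "cox_le G S u v \<longleftrightarrow> (\<exists>x\<in>min_reps G S (supp G S u). v = x \<otimes> u)"
proof
  assume "cox_le G S u v"
  then have p: "par_comp G S (supp G S u) v = u" by (simp add: cox_le_def)
  obtain x y where xy: "x \<in> min_reps G S (supp G S u)" "y \<in> parabolic G (supp G S u)" "v = x \<otimes> y"
    using min_reps_decomposition[OF supp_subset_gens v] by blast
  then show "\<exists>x\<in>min_reps G S (supp G S u). v = x \<otimes> u"
    using par_comp_eq[OF supp_subset_gens xy(1,2)] p by auto
next
  assume "\<exists>x\<in>min_reps G S (supp G S u). v = x \<otimes> u"
  then show "cox_le G S u v"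
    using par_comp_eq[OF supp_subset_gens _ mem_parabolic_supp[OF u]] u v by (auto simp: cox_le_def)
qed

lemma cox_le_supp_subset:
  assumes le: "cox_le G S u v"
  shows "supp G S u \<subseteq> supp G S v"
proof -
  have u: "u \<in> carrier G" and v: "v \<in> carrier G" using le by (auto simp: cox_le_def)
  then obtain x where x: "x \<in> min_reps G S (supp G S u)" "v = x \<otimes> u" using le cox_le_iff by blast
  show ?thesis
    using supp_subset_supp_mult[OF supp_subset_gens x(1) mem_parabolic_supp[OF u]] x(2) by simp
qed

lemma cox_le_imp_left_weak_le:
  assumes le: "cox_le G S u v"
  shows "left_weak_le G S u v"
proof -
  have u: "u \<in> carrier G" and v: "v \<in> carrier G" using le by (auto simp: cox_le_def)
  then obtain x where x: "x \<in> min_reps G S (supp G S u)" "v = x \<otimes> u" using le cox_le_iff by blast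
  show ?thesis unfolding left_weak_le_def
    using x min_reps_closed[OF x(1)]
      len_min_reps_mult[OF supp_subset_gens x(1) mem_parabolic_supp[OF u]]
    by (intro bexI[of _ x]) simp_all
qed

lemma cox_interval_eq:
  assumes le: "cox_le G S u v"
  shows "cox_interval G S u v = {par_comp G S I v | I. supp G S u \<subseteq> I \<and> I \<subseteq> supp G S v}"
proof (intro equalityI subsetI)
  fix w assume "w \<in> cox_interval G S u v"
  then have w: "cox_le G S u w" "cox_le G S w v" by (auto simp: cox_interval_def)
  then have "w = par_comp G S (supp G S w) v" by (simp add: cox_le_def)
  moreover have "supp G S u \<subseteq> supp G S w" "supp G S w \<subseteq> supp G S v"
    using cox_le_supp_subset w by auto
  ultimately show "w \<in> {par_comp G S I v | I. supp G S u \<subseteq> I \<and> I \<subseteq> supp G S v}" by blast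
next
  fix w assume "w \<in> {par_comp G S I v | I. supp G S u \<subseteq> I \<and> I \<subseteq> supp G S v}"
  then obtain I where I: "supp G S u \<subseteq> I" "I \<subseteq> supp G S v" and w: "w = par_comp G S I v" by blast
  have IS: "I \<subseteq> S" using I(2) supp_subset_gens by blast
  have u: "u \<in> carrier G" and v: "v \<in> carrier G" and p: "par_comp G S (supp G S u) v = u"
    using le by (auto simp: cox_le_def)
  obtain x y where xy: "x \<in> min_reps G S I" "y \<in> parabolic G I" "v = x \<otimes> y"
    using min_reps_decomposition[OF IS v] by blast
  have wy: "w = y" using par_comp_eq[OF IS xy(1,2)] xy(3) w by simp
  have wc: "w \<in> carrier G" using wy parabolic_closed[OF IS xy(2)] by simp
  have "par_comp G S (supp G S u) w = u" using par_comp_par_comp[OF I(1) IS v] w p by simp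
  then have "cox_le G S u w" using u wc by (simp add: cox_le_def)
  moreover have "x \<in> min_reps G S (supp G S w)"
    using min_reps_antimono[OF supp_subset_if_mem_parabolic[OF IS]] xy(1,2) wy by blast
  then have "cox_le G S w v" using cox_le_iff[OF wc v] xy(3) wy by blast
  ultimately show "w \<in> cox_interval G S u v" using wc by (simp add: cox_interval_def)
qed

lemma inj_on_rcos_inv_min_reps:
  assumes I: "I \<subseteq> S"
  shows "inj_on (\<lambda>x. parabolic G I #> inv x) (min_reps G S I)"
proof (rule inj_onI)
  let ?H = "parabolic G I"
  have H: "subgroup ?H G" using subgroup_parabolic[OF I] .
  fix x x' assume x: "x \<in> min_reps G S I" and x': "x' \<in> min_reps G S I"
    and eq: "?H #> inv x = ?H #> inv x'"
  have xc: "x \<in> carrier G" and x'c: "x' \<in> carrier G" using x x' min_reps_closed by auto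
  have "inv x' \<in> ?H #> inv x" using repr_independenceD[OF H _ eq] x'c by simp
  then have "inv x' \<otimes> inv (inv x) \<in> ?H" using subgroup.rcos_module_imp[OF H is_group] xc by blast
  then have h: "inv x' \<otimes> x \<in> ?H" using xc by simp
  have "x \<otimes> \<one> = x' \<otimes> (inv x' \<otimes> x)" using xc x'c by (simp add: m_assoc[symmetric])
  then show "x = x'"
    using min_reps_decomposition_unique[OF I x x' subgroup.one_closed[OF H] h] by blast
qed

lemma rcos_inv_image_min_reps:
  assumes I: "I \<subseteq> S"
  shows "(\<lambda>x. parabolic G I #> inv x) ` min_reps G S I = rcosets (parabolic G I)"
proof (intro equalityI subsetI)
  fix C assume "C \<in> (\<lambda>x. parabolic G I #> inv x) ` min_reps G S I"
  then show "C \<in> rcosets (parabolic G I)" using min_reps_closed by (auto simp: RCOSETS_def)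
next
  let ?H = "parabolic G I"
  have H: "subgroup ?H G" using subgroup_parabolic[OF I] .
  fix C assume "C \<in> rcosets ?H"
  then obtain a where a: "a \<in> carrier G" "C = ?H #> a" by (auto simp: RCOSETS_def)
  obtain x y where xy: "x \<in> min_reps G S I" "y \<in> ?H" "inv a = x \<otimes> y"
    using min_reps_decomposition[OF I] a(1) by blast
  have xc: "x \<in> carrier G" and yc: "y \<in> carrier G"
    using min_reps_closed[OF xy(1)] parabolic_closed[OF I xy(2)] .
  have "a = inv (inv a)" using a(1) by simp
  also have "\<dots> = inv y \<otimes> inv x" using xy(3) xc yc by (simp add: inv_mult_group)
  finally have "a \<otimes> inv (inv x) = inv y" using xc yc by (simp add: m_assoc)
  then have "a \<in> ?H #> inv x"
    using subgroup.rcos_module_rev[OF H is_group] a(1) xc subgroup.m_inv_closed[OF H xy(2)] by simp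
  then have "C = ?H #> inv x" using repr_independence[OF _ _ H] a xc by simp
  then show "C \<in> (\<lambda>x. ?H #> inv x) ` min_reps G S I" using xy(1) by blast
qed

lemma card_cox_le_above:
  assumes u: "u \<in> carrier G"
  shows "card {w \<in> carrier G. cox_le G S u w} = card (rcosets (parabolic G (supp G S u)))"
proof -
  let ?X = "min_reps G S (supp G S u)"
  have "bij_betw (\<lambda>x. x \<otimes> u) ?X {w \<in> carrier G. cox_le G S u w}"
  proof (rule bij_betw_imageI)
    show "inj_on (\<lambda>x. x \<otimes> u) ?X" using u min_reps_closed by (intro inj_onI) simp
    show "(\<lambda>x. x \<otimes> u) ` ?X = {w \<in> carrier G. cox_le G S u w}"
    proof (intro equalityI subsetI)
      fix w assume "w \<in> (\<lambda>x. x \<otimes> u) ` ?X"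
      then obtain x where x: "x \<in> ?X" "w = x \<otimes> u" by blast
      then have "w \<in> carrier G" using min_reps_closed u by simp
      then show "w \<in> {w \<in> carrier G. cox_le G S u w}" using cox_le_iff[OF u] x by blast
    next
      fix w assume "w \<in> {w \<in> carrier G. cox_le G S u w}"
      then show "w \<in> (\<lambda>x. x \<otimes> u) ` ?X" using cox_le_iff[OF u] by blast
    qed
  qed
  moreover have
    "bij_betw (\<lambda>x. parabolic G (supp G S u) #> inv x) ?X (rcosets (parabolic G (supp G S u)))"
    by (intro bij_betw_imageI inj_on_rcos_inv_min_reps rcos_inv_image_min_reps supp_subset_gens)
  ultimately show ?thesis using bij_betw_same_card by metis
qed

end

theorem mainTheorem4:
  fixes G :: "('a, 'b) monoid_scheme" and S :: "'a set" and u v :: 'a and k :: nat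
  assumes cox: "coxeter_system G S"
    and fin: "finite S"
    and u: "u \<in> carrier G" and v: "v \<in> carrier G"
  shows "(cox_le G S u v \<longrightarrow> cosupp G S v \<subseteq> cosupp G S u)
       \<and> (cox_le G S u v \<longrightarrow>
            cox_interval G S u v = {par_comp G S I v | I. supp G S u \<subseteq> I \<and> I \<subseteq> supp G S v})
       \<and> (cox_le G S u v \<longrightarrow> left_weak_le G S u v)
       \<and> (finite (rcosets\<^bsub>G\<^esub> (parabolic G (supp G S u))) \<and>
          card (rcosets\<^bsub>G\<^esub> (parabolic G (supp G S u))) = k
          \<longrightarrow> card {w \<in> carrier G. cox_le G S u w} = k)"
proof -
  interpret coxeter G S using coxeter_system_imp_coxeter[OF cox] .
  show ?thesis
    using cox_le_supp_subset cox_interval_eq cox_le_imp_left_weak_le card_cox_le_above[OF u]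
    by (auto simp: cosupp_def)
qed

end
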